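(* In the setting of the context, let $\sigma$ be a faithful permutation of $\{1,\dots,T\}$ and assume the maximum delay is bounded by $\tau$. Then for every $t\in\{1,\dots,T\}$: (a) $|\sigma(t)-t|\le\tau$; (b) $\{\sigma(1),\dots,\sigma(t)\}\setminus\mathcal S_{\sigma(t)}\subset\{\sigma(t)-\tau,\dots,\sigma(t)+\tau\}$.
   Context: Delayed (possibly multi-agent) feedback protocol over rounds $t=1,\dots,T$: at each round the active agent plays a point using the feedback of the timestamps in $\mathcal S_t\subset\{1,\dots,t-1\}$ (the set of timestamps of feedback available to the active agent at time $t$). A permutation $\sigma$ of $\{1,\dots,T\}$ is faithful if $s\in\mathcal S_t$ implies $\sigma^{-1}(s)<\sigma^{-1}(t)$. The maximum delay is bounded by $\tau$ if $\{1,\dots,t-\tau-1\}\subset\mathcal S_t$ for all $t$. *)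

theory Defs
  imports Main
begin

definition faithful :: "nat \<Rightarrow> (nat \<Rightarrow> nat set) \<Rightarrow> (nat \<Rightarrow> nat) \<Rightarrow> bool" where
  "faithful T S \<sigma> \<longleftrightarrow> bij_betw \<sigma> {1..T} {1..T} \<and>
     (\<forall>t\<in>{1..T}. \<forall>s\<in>S t. inv_into {1..T} \<sigma> s < inv_into {1..T} \<sigma> t)"

definition delay_bounded :: "nat \<Rightarrow> (nat \<Rightarrow> nat set) \<Rightarrow> nat \<Rightarrow> bool" where
  "delay_bounded T S \<tau> \<longleftrightarrow> (\<forall>t\<in>{1..T}. {1..t - \<tau> - 1} \<subseteq> S t)"

end

theory Submission
  imports Defs
begin

text \<open>Let \<open>\<pi>\<close> be the inverse of \<open>\<sigma>\<close>, i.e. \<open>\<pi> s\<close> is the position at which round \<open>s\<close> is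
  played. Faithfulness and the delay bound together say that \<open>s + \<tau> < a\<close> forces \<open>\<pi> s < \<pi> a\<close>.
  So the \<open>u - \<tau> - 1\<close> rounds before \<open>u - \<tau>\<close> all occupy positions before \<open>\<pi> u\<close>, and the
  \<open>T - u - \<tau>\<close> rounds after \<open>u + \<tau>\<close> all occupy positions after \<open>\<pi> u\<close>; counting gives
  \<open>|\<pi> u - u| \<le> \<tau>\<close>, which is (a). For (b), a round \<open>x\<close> played no later than \<open>\<sigma> t\<close> but
  missing from \<open>S (\<sigma> t)\<close> cannot be too old (delay bound) nor too young (faithfulness).\<close>

definition delay_monotone :: "nat \<Rightarrow> nat \<Rightarrow> (nat \<Rightarrow> nat) \<Rightarrow> bool" where
  "delay_monotone T \<tau> \<pi> \<longleftrightarrow> (\<forall>s\<in>{1..T}. \<forall>a\<in>{1..T}. s + \<tau> < a \<longrightarrow> \<pi> s < \<pi> a)"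

lemma delay_monotoneD:
  "delay_monotone T \<tau> \<pi> \<Longrightarrow> s \<in> {1..T} \<Longrightarrow> a \<in> {1..T} \<Longrightarrow> s + \<tau> < a \<Longrightarrow> \<pi> s < \<pi> a"
  unfolding delay_monotone_def by blast

lemma delay_boundedD:
  assumes "delay_bounded T S \<tau>" and "a \<in> {1..T}" and "1 \<le> s" and "s + \<tau> < a"
  shows "s \<in> S a"
proof -
  have "{1..a - \<tau> - 1} \<subseteq> S a" using assms(1,2) unfolding delay_bounded_def by blast
  moreover have "s \<in> {1..a - \<tau> - 1}" using assms(3,4) by simp
  ultimately show ?thesis by blast
qed

lemma faithful_delay_monotone:
  assumes "faithful T S \<sigma>" and "delay_bounded T S \<tau>"
  shows "delay_monotone T \<tau> (inv_into {1..T} \<sigma>)"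
  unfolding delay_monotone_def
proof (intro ballI impI)
  fix s a assume "s \<in> {1..T}" and a: "a \<in> {1..T}" and "s + \<tau> < a"
  then have "s \<in> S a" using delay_boundedD[OF assms(2) a] by simp
  then show "inv_into {1..T} \<sigma> s < inv_into {1..T} \<sigma> a"
    using assms(1) a unfolding faithful_def by blast
qed

lemma delay_monotone_le_image_add:
  assumes mono: "delay_monotone T \<tau> \<pi>" and bij: "bij_betw \<pi> {1..T} {1..T}"
    and u: "u \<in> {1..T}"
  shows "u \<le> \<pi> u + \<tau>"
proof -
  let ?older = "{1..u - \<tau> - 1}"
  have older: "?older \<subseteq> {1..T}" using u by auto
  have "\<pi> s \<in> {1..<\<pi> u}" if s: "s \<in> ?older" for s
  proof -
    have "\<pi> s < \<pi> u" using delay_monotoneD[OF mono _ u] older s by auto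
    moreover have "\<pi> s \<in> {1..T}" using bij_betw_apply[OF bij] older s by blast
    ultimately show ?thesis by simp
  qed
  then have "card ?older \<le> card {1..<\<pi> u}"
    by (intro card_inj_on_le[OF inj_on_subset[OF bij_betw_imp_inj_on[OF bij] older]]) auto
  then show ?thesis using bij_betw_apply[OF bij u] by simp arith
qed

lemma delay_monotone_image_le_add:
  assumes mono: "delay_monotone T \<tau> \<pi>" and bij: "bij_betw \<pi> {1..T} {1..T}"
    and u: "u \<in> {1..T}"
  shows "\<pi> u \<le> u + \<tau>"
proof -
  let ?younger = "{u + \<tau> + 1..T}"
  have younger: "?younger \<subseteq> {1..T}" by auto
  have "\<pi> v \<in> {\<pi> u + 1..T}" if v: "v \<in> ?younger" for v
  proof -
    have "\<pi> u < \<pi> v" using delay_monotoneD[OF mono u] younger v by auto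
    moreover have "\<pi> v \<in> {1..T}" using bij_betw_apply[OF bij] younger v by blast
    ultimately show ?thesis by simp
  qed
  then have "card ?younger \<le> card {\<pi> u + 1..T}"
    by (intro card_inj_on_le[OF inj_on_subset[OF bij_betw_imp_inj_on[OF bij] younger]]) auto
  then show ?thesis using bij_betw_apply[OF bij u] by simp arith
qed

lemma faithful_bij: "faithful T S \<sigma> \<Longrightarrow> bij_betw \<sigma> {1..T} {1..T}"
  unfolding faithful_def by blast

lemma faithful_displacement:
  assumes faith: "faithful T S \<sigma>" and delay: "delay_bounded T S \<tau>" and t: "t \<in> {1..T}"
  shows "\<bar>int (\<sigma> t) - int t\<bar> \<le> int \<tau>"
proof -
  let ?\<pi> = "inv_into {1..T} \<sigma>"
  have bij: "bij_betw \<sigma> {1..T} {1..T}" using faith by (rule faithful_bij)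
  have bij_\<pi>: "bij_betw ?\<pi> {1..T} {1..T}" using bij by (rule bij_betw_inv_into)
  have mono: "delay_monotone T \<tau> ?\<pi>" using faith delay by (rule faithful_delay_monotone)
  have u: "\<sigma> t \<in> {1..T}" using bij t by (rule bij_betw_apply)
  have "?\<pi> (\<sigma> t) = t" using bij t by (rule bij_betw_inv_into_left)
  then show ?thesis
    using delay_monotone_le_image_add[OF mono bij_\<pi> u] delay_monotone_image_le_add[OF mono bij_\<pi> u]
    by linarith
qed

lemma faithful_missing_feedback_near:
  assumes faith: "faithful T S \<sigma>" and delay: "delay_bounded T S \<tau>" and t: "t \<in> {1..T}"
    and s: "s \<in> {1..t}" and missing: "\<sigma> s \<notin> S (\<sigma> t)"
  shows "\<sigma> s \<in> {\<sigma> t - \<tau> .. \<sigma> t + \<tau>}"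
proof -
  let ?\<pi> = "inv_into {1..T} \<sigma>"
  have bij: "bij_betw \<sigma> {1..T} {1..T}" using faith by (rule faithful_bij)
  have mono: "delay_monotone T \<tau> ?\<pi>" using faith delay by (rule faithful_delay_monotone)
  have u: "\<sigma> t \<in> {1..T}" using bij t by (rule bij_betw_apply)
  have x: "\<sigma> s \<in> {1..T}" using bij_betw_apply[OF bij] s t by auto
  have "\<sigma> t \<le> \<sigma> s + \<tau>"
    using delay_boundedD[OF delay u, of "\<sigma> s"] x missing by fastforce
  moreover have "\<sigma> s \<le> \<sigma> t + \<tau>"
  proof (rule ccontr)
    assume "\<not> \<sigma> s \<le> \<sigma> t + \<tau>"
    then have "?\<pi> (\<sigma> t) < ?\<pi> (\<sigma> s)" using delay_monotoneD[OF mono u x] by simp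
    then have "t < s" using bij_betw_inv_into_left[OF bij] s t by simp
    then show False using s by simp
  qed
  ultimately show ?thesis by simp
qed

theorem proposition11:
  fixes T \<tau> :: nat and S :: "nat \<Rightarrow> nat set" and \<sigma> :: "nat \<Rightarrow> nat"
  assumes S_sub: "\<forall>t\<in>{1..T}. S t \<subseteq> {1..<t}"
    and faith: "faithful T S \<sigma>"
    and delay: "delay_bounded T S \<tau>"
    and t: "t \<in> {1..T}"
  shows "\<bar>int (\<sigma> t) - int t\<bar> \<le> int \<tau>
    \<and> \<sigma> ` {1..t} - S (\<sigma> t) \<subseteq> {\<sigma> t - \<tau> .. \<sigma> t + \<tau>}"
  using faithful_displacement[OF faith delay t] faithful_missing_feedback_near[OF faith delay t]
  by blast

end
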